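(* In the binary-action global game described in the context, for every $\beta\in\Delta(T)$: $\bigvee\mathcal{S}(\beta)=1$ if and only if $\beta\in\mathrm{C}_{1-x}(\Delta(T))$; and $\bigwedge\mathcal{S}(\beta)=0$ if and only if $\beta\in\mathrm{C}_{x}(\Delta(T))$.
   Context: Game: a single (trivial) characteristic, so the population is described only by beliefs; actions $A=\{0,1\}$ ("noninvest", "invest") ordered by $1\succeq 0$, all available to everyone; states of nature $S=[-1,2]$; payoff $v(a,s,\vartheta)=a\,(s+\vartheta-1)$ where $\vartheta$ is the fraction of the population playing $1$. A type space $(T,\sigma,\tau)$ consists of a nonempty compact metrizable $T$, a continuous $\sigma:T\to S$, and a continuous $\tau:T\to\Delta(\Delta(T))$ (population distribution of beliefs); $\Delta(\cdot)$ denotes Borel probability measures with the weak topology. Interim correlated rationalizability: $\mathcal{S}_0(\beta)=A$; given $\mathcal{S}_m:\Delta(T)\to 2^A$, let $\mathcal{D}_m(t)$ be the set of $\kappa\in\Delta(\Delta(T)\times A)$ with $\Delta(T)$-marginal $\tau(t)$ and $\kappa(\operatorname{graph}\mathcal{S}_m)=1$; $\mathcal{S}_{m+1}(\beta)$ is the set of $a\in A$ such that some $\mu\in\Delta(T\times\Delta(\Delta(T)\times A))$ with $T$-marginal $\beta$ and $\mu(\operatorname{graph}\mathcal{D}_m)=1$ has $a\in\operatorname{argmax}_{a'\in A}\int a'(\sigma(t)+\kappa(\Delta(T)\times\{1\})-1)\,\mathrm d\mu(t,\kappa)$; $\mathcal{S}=\bigcap_m\mathcal{S}_m$. $\bigvee\mathcal{S}(\beta)=\max\mathcal{S}(\beta)$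 and $\bigwedge\mathcal{S}(\beta)=\min\mathcal{S}(\beta)$. Notation: $x_\beta=x(\beta)=\int\sigma\,\mathrm d\beta$; for Borel $E\subseteq\Delta(T)$, $\mathrm{F}_\beta(E)=\int\tau(t)(E)\,\mathrm d\beta(t)$. For measurable $f:\Delta(T)\to\mathbb{R}$, $\mathrm{B}_f(E)=\{\beta\in E:\mathrm{F}_\beta(E)\ge f(\beta)\}$, $\mathrm{B}_f^1=\mathrm{B}_f$, $\mathrm{B}_f^{n+1}(E)=\mathrm{B}_f(\mathrm{B}_f^n(E))$, and $\mathrm{C}_f(E)=\bigcap_n\mathrm{B}_f^n(E)$; here $1-x$ and $x$ denote the functions $\beta\mapsto1-x_\beta$ and $\beta\mapsto x_\beta$. *)

theory Defs
  imports "HOL-Probability.Probability"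
begin

text \<open>The type variable 't is the compact metrizable space T (compactness is an
assumption of the theorem).
The measurable structure on Delta(T) is that of prob_algebra (generated by the
evaluation maps), which coincides with the Borel sigma-algebra of the weak topology
since T is Polish.\<close>

definition DeltaT :: "'t::topological_space measure set" where
  "DeltaT = space (prob_algebra (borel :: 't measure))"

text \<open>Action set A = {0,1} (0 = noninvest, 1 = invest).\<close>
definition Act :: "real set" where
  "Act = {0, 1}"

definition DTA :: "('t::topological_space measure \<times> real) measure" where
  "DTA = prob_algebra (borel :: 't measure) \<Otimes>\<^sub>M count_space Act"

definition payoff :: "real \<Rightarrow> real \<Rightarrow> real \<Rightarrow> real" where
  "payoff a s \<theta> = a * (s + \<theta> - 1)"

definition wconv :: "('a \<Rightarrow> real) set \<Rightarrow> (nat \<Rightarrow> 'a measure) \<Rightarrow> 'a measure \<Rightarrow> bool" where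
  "wconv Cb \<mu>s \<mu> \<longleftrightarrow> (\<forall>f\<in>Cb. (\<lambda>n. \<integral>x. f x \<partial>(\<mu>s n)) \<longlonglongrightarrow> (\<integral>x. f x \<partial>\<mu>))"

definition CbT :: "('t::topological_space \<Rightarrow> real) set" where
  "CbT = {f. continuous_on UNIV f \<and> bounded (range f)}"

text \<open>Bounded continuous real functions on Delta(T) with the weak topology
(Delta(T) is metrizable, so continuity is sequential continuity).\<close>
definition CbDelta :: "('t::topological_space measure \<Rightarrow> real) set" where
  "CbDelta = {g. bounded (g ` DeltaT) \<and>
     (\<forall>\<beta>s \<beta>. (\<forall>n. \<beta>s n \<in> DeltaT) \<and> \<beta> \<in> DeltaT \<and> wconv CbT \<beta>s \<beta>
              \<longrightarrow> (\<lambda>n. g (\<beta>s n)) \<longlonglongrightarrow> g \<beta>)}"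

text \<open>Type space: sigma : T -> S = [-1,2] continuous, tau : T -> Delta(Delta(T)) continuous
(T is metrizable, so continuity is sequential continuity; convergence in the weak
topology of Delta(Delta(T)) is convergence of integrals of bounded continuous functions).\<close>
definition type_space :: "('t::metric_space \<Rightarrow> real) \<Rightarrow> ('t \<Rightarrow> 't measure measure) \<Rightarrow> bool" where
  "type_space \<sigma> \<tau> \<longleftrightarrow>
     compact (UNIV :: 't set) \<and>
     continuous_on UNIV \<sigma> \<and> (\<forall>t. \<sigma> t \<in> {-1..2}) \<and>
     (\<forall>t. \<tau> t \<in> space (prob_algebra (prob_algebra (borel :: 't measure)))) \<and>
     (\<forall>ts t. ts \<longlonglongrightarrow> t \<longrightarrow> wconv CbDelta (\<lambda>n. \<tau> (ts n)) (\<tau> t))"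

definition Dset :: "('t::topological_space \<Rightarrow> 't measure measure)
      \<Rightarrow> ('t measure \<Rightarrow> real set) \<Rightarrow> 't \<Rightarrow> ('t measure \<times> real) measure set" where
  "Dset \<tau> Sm t = {\<kappa> \<in> space (prob_algebra DTA).
      distr \<kappa> (prob_algebra borel) fst = \<tau> t \<and>
      (AE p in \<kappa>. snd p \<in> Sm (fst p))}"

definition Sstep :: "('t::topological_space \<Rightarrow> real) \<Rightarrow> ('t \<Rightarrow> 't measure measure)
      \<Rightarrow> ('t measure \<Rightarrow> real set) \<Rightarrow> 't measure \<Rightarrow> real set" where
  "Sstep \<sigma> \<tau> Sm \<beta> = {a \<in> Act. \<exists>\<mu> \<in> space (prob_algebra (borel \<Otimes>\<^sub>M prob_algebra DTA)).
      distr \<mu> borel fst = \<beta> \<and>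
      (AE p in \<mu>. snd p \<in> Dset \<tau> Sm (fst p)) \<and>
      (\<forall>a'\<in>Act.
         (\<integral>p. payoff a' (\<sigma> (fst p)) (measure (snd p) (DeltaT \<times> {1})) \<partial>\<mu>)
           \<le> (\<integral>p. payoff a (\<sigma> (fst p)) (measure (snd p) (DeltaT \<times> {1})) \<partial>\<mu>))}"

primrec Sm :: "('t::topological_space \<Rightarrow> real) \<Rightarrow> ('t \<Rightarrow> 't measure measure)
      \<Rightarrow> nat \<Rightarrow> 't measure \<Rightarrow> real set" where
  "Sm \<sigma> \<tau> 0 = (\<lambda>\<beta>. Act)"
| "Sm \<sigma> \<tau> (Suc m) = Sstep \<sigma> \<tau> (Sm \<sigma> \<tau> m)"

definition Srat :: "('t::topological_space \<Rightarrow> real) \<Rightarrow> ('t \<Rightarrow> 't measure measure)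
      \<Rightarrow> 't measure \<Rightarrow> real set" where
  "Srat \<sigma> \<tau> \<beta> = (\<Inter>m. Sm \<sigma> \<tau> m \<beta>)"

definition xb :: "('t::topological_space \<Rightarrow> real) \<Rightarrow> 't measure \<Rightarrow> real" where
  "xb \<sigma> \<beta> = (\<integral>t. \<sigma> t \<partial>\<beta>)"

definition Fb :: "('t::topological_space \<Rightarrow> 't measure measure) \<Rightarrow> 't measure
      \<Rightarrow> 't measure set \<Rightarrow> real" where
  "Fb \<tau> \<beta> E = (\<integral>t. measure (\<tau> t) E \<partial>\<beta>)"

definition Bop :: "('t::topological_space \<Rightarrow> 't measure measure) \<Rightarrow> ('t measure \<Rightarrow> real)
      \<Rightarrow> 't measure set \<Rightarrow> 't measure set" where
  "Bop \<tau> f E = {\<beta> \<in> E. Fb \<tau> \<beta> E \<ge> f \<beta>}"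

definition Cop :: "('t::topological_space \<Rightarrow> 't measure measure) \<Rightarrow> ('t measure \<Rightarrow> real)
      \<Rightarrow> 't measure set \<Rightarrow> 't measure set" where
  "Cop \<tau> f E = (\<Inter>n. (Bop \<tau> f ^^ Suc n) E)"

end

theory Submission
  imports Defs
begin

text \<open>
  By induction on \<open>m\<close>: the beliefs at which investing survives \<open>m\<close> rounds form
  \<open>B\<^sup>m\<^sub>1\<^sub>-\<^sub>x(\<Delta>(T))\<close>, those at which not investing survives form \<open>B\<^sup>m\<^sub>x(\<Delta>(T))\<close>,
  and no \<open>S\<^sub>m(\<beta>)\<close> is empty.  Let \<open>E\<^sub>1\<close>, \<open>E\<^sub>0\<close> be the beliefs at which \<open>1\<close>,
  resp. \<open>0\<close>, survives round \<open>m\<close>.  A conjecture \<open>\<kappa> \<in> D\<^sub>m(t)\<close> gives investment a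
  probability between \<open>1 - \<tau>(t)(E\<^sub>0)\<close> and \<open>\<tau>(t)(E\<^sub>1)\<close>, and both bounds are attained by
  the selections "invest exactly on \<open>E\<^sub>1\<close>" and "invest exactly off \<open>E\<^sub>0\<close>".  As the
  expected gain from investing is \<open>x\<^sub>\<beta> + \<integral>\<kappa>(1) - 1\<close>, investing is a best reply iff
  \<open>1 - x\<^sub>\<beta> \<le> F\<^sub>\<beta>(E\<^sub>1)\<close>, and not investing iff \<open>x\<^sub>\<beta> \<le> F\<^sub>\<beta>(E\<^sub>0)\<close>.

  The measure theory behind these conjectures (measurability of \<open>\<tau>\<close> into \<open>\<Delta>(\<Delta>(T))\<close>
  and of the consistency condition \<open>marg \<kappa> = \<tau>(t)\<close>) rests on a countable \<open>\<inter>\<close>-stable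
  family of weakly closed sets generating the Borel sets of \<open>\<Delta>(T)\<close>, built from a dense
  sequence of the compact metric space \<open>T\<close>.
\<close>

section \<open>A countable generator of the Borel sets of a compact metric space\<close>

lemma compact_metric_dense_seq:
  assumes "compact (UNIV :: 'a::metric_space set)"
  shows "\<exists>d::nat \<Rightarrow> 'a. \<forall>x e. 0 < e \<longrightarrow> (\<exists>i. dist x (d i) < e)"
proof -
  have "\<exists>F. finite F \<and> F \<subseteq> UNIV \<and> (UNIV::'a set) \<subseteq> (\<Union>c\<in>F. ball c (1 / Suc n))" for n :: nat
    using seq_compact_imp_totally_bounded[OF compact_imp_seq_compact[OF assms]] by simp
  then obtain F :: "nat \<Rightarrow> 'a set"
    where F: "\<And>n. finite (F n)" "\<And>n. UNIV \<subseteq> (\<Union>c\<in>F n. ball c (1 / Suc n))"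
    by metis
  have countable: "countable (\<Union>n. F n)"
    using F(1) by (auto intro: countable_finite)
  show ?thesis
  proof (intro exI[of _ "from_nat_into (\<Union>n. F n)"] allI impI)
    fix x :: 'a and e :: real
    assume "0 < e"
    then obtain n :: nat where n: "1 / Suc n < e"
      by (rule nat_approx_posE)
    obtain c where c: "c \<in> F n" "x \<in> ball c (1 / Suc n)"
      using F(2)[of n] by blast
    then obtain i where "from_nat_into (\<Union>n. F n) i = c"
      using from_nat_into_surj[OF countable] by blast
    with c n have "dist x (from_nat_into (\<Union>n. F n) i) < e"
      by (auto simp: dist_commute)
    then show "\<exists>i. dist x (from_nat_into (\<Union>n. F n) i) < e" ..
  qed
qed

definition dense_seq :: "nat \<Rightarrow> 'a::metric_space" where
  "dense_seq = (SOME d. \<forall>x e. 0 < e \<longrightarrow> (\<exists>i. dist x (d i) < e))"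

lemma dense_seq_dense:
  assumes "compact (UNIV :: 'a::metric_space set)" and "0 < e"
  shows "\<exists>i. dist (x::'a) (dense_seq i) < e"
  using someI_ex[OF compact_metric_dense_seq[OF assms(1)]] assms(2)
  unfolding dense_seq_def by blast

definition cball_cap :: "(nat \<times> rat) list \<Rightarrow> 'a::metric_space set" where
  "cball_cap l = (\<Inter>(i, r)\<in>set l. cball (dense_seq i) (of_rat r))"

lemma closed_cball_cap: "closed (cball_cap l)"
  unfolding cball_cap_def by auto

lemma cball_cap_append: "cball_cap (l @ l') = cball_cap l \<inter> cball_cap l'"
  unfolding cball_cap_def by (simp add: INT_Un)

lemma Int_stable_cball_cap: "Int_stable (range cball_cap)"
  unfolding Int_stable_def by (auto simp: cball_cap_append[symmetric])

lemma sets_borel_eq_cball_cap: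
  assumes "compact (UNIV :: 'a::metric_space set)"
  shows "sets (borel::'a measure) = sigma_sets UNIV (range cball_cap)"
proof -
  have "borel = sigma (UNIV::'a set) (range cball_cap)"
  proof (rule borel_eq_sigmaI1[OF borel_def, where F=cball_cap and A=UNIV])
    show "cball_cap l \<in> sets borel" for l
      using closed_cball_cap by (rule borel_closed)
    fix U :: "'a set"
    assume "U \<in> Collect open"
    then have U: "open U" by simp
    define K where "K = {(i, r). cball (dense_seq i) (of_rat r) \<subseteq> U}"
    have U_eq: "U = (\<Union>p\<in>K. cball_cap [p])"
    proof
      show "(\<Union>p\<in>K. cball_cap [p]) \<subseteq> U"
        unfolding K_def cball_cap_def by auto
      show "U \<subseteq> (\<Union>p\<in>K. cball_cap [p])"
      proof
        fix x assume "x \<in> U"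
        then obtain e where e: "0 < e" "ball x e \<subseteq> U"
          using U open_contains_ball by blast
        obtain i where i: "dist x (dense_seq i) < e / 3"
          using dense_seq_dense[OF assms, of "e / 3" x] e by auto
        obtain r where r: "r \<in> \<rat>" "e / 3 < r" "r < 2 * e / 3"
          using Rats_dense_in_real[of "e / 3" "2 * e / 3"] e by auto
        then obtain q where q: "r = of_rat q"
          using Rats_cases by blast
        have "cball (dense_seq i) r \<subseteq> ball x e"
        proof
          fix y :: 'a
          assume "y \<in> cball (dense_seq i) r"
          then show "y \<in> ball x e"
            using i r dist_triangle[of x y "dense_seq i"] by simp
        qed
        then have "(i, q) \<in> K"
          unfolding K_def using e q by auto
        moreover have "x \<in> cball_cap [(i, q)]"
          unfolding cball_cap_def using i r q by (auto simp: dist_commute)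
        ultimately show "x \<in> (\<Union>p\<in>K. cball_cap [p])" by blast
      qed
    qed
    have "countable K" by simp
    then show "U \<in> sets (sigma UNIV (range cball_cap))"
      by (subst U_eq, intro sets.countable_UN') auto
  qed
  then have "sets (borel::'a measure) = sets (sigma UNIV (range cball_cap))"
    by simp
  also have "\<dots> = sigma_sets UNIV (range cball_cap)"
    by (rule sets_measure_of) simp
  finally show ?thesis .
qed

section \<open>Continuous approximation of indicators\<close>

definition cutoff :: "nat \<Rightarrow> real \<Rightarrow> real" where
  "cutoff n g = min 1 (max 0 (1 - real n * g))"

lemma cutoff_bounds: "0 \<le> cutoff n g" "cutoff n g \<le> 1"
  unfolding cutoff_def by auto

lemma abs_cutoff_le: "\<bar>cutoff n g\<bar> \<le> 1"
  using cutoff_bounds[of n g] by simp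

lemma cutoff_tendsto: "(\<lambda>n. cutoff n g) \<longlonglongrightarrow> (if g \<le> 0 then 1 else 0)"
proof (cases "g \<le> 0")
  case True
  then have "cutoff n g = 1" for n
    using mult_nonneg_nonpos[of "real n" g] by (simp add: cutoff_def)
  then show ?thesis using True by simp
next
  case False
  then obtain N :: nat where N: "1 < real N * g"
    using ex_less_of_nat_mult[of g 1] by auto
  have "cutoff n g = 0" if "N \<le> n" for n
  proof -
    have "real N * g \<le> real n * g"
      using that False by (intro mult_right_mono) auto
    then show ?thesis using N by (simp add: cutoff_def)
  qed
  then have "eventually (\<lambda>n. cutoff n g = 0) sequentially"
    by (auto simp: eventually_sequentially)
  then show ?thesis
    using False by (simp add: tendsto_eventually)
qed

lemma integral_tendsto_measure:
  fixes f :: "nat \<Rightarrow> 'a \<Rightarrow> real"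
  assumes "prob_space M" "A \<in> sets M"
    and "\<And>n. f n \<in> borel_measurable M"
    and "\<And>n x. x \<in> space M \<Longrightarrow> \<bar>f n x\<bar> \<le> 1"
    and "\<And>x. x \<in> space M \<Longrightarrow> (\<lambda>n. f n x) \<longlonglongrightarrow> indicator A x"
  shows "(\<lambda>n. \<integral>x. f n x \<partial>M) \<longlonglongrightarrow> measure M A"
proof -
  interpret prob_space M by fact
  have "(\<lambda>n. \<integral>x. f n x \<partial>M) \<longlonglongrightarrow> (\<integral>x. indicator A x \<partial>M)"
    by (rule integral_dominated_convergence[where w="\<lambda>_. 1"]) (use assms in \<open>auto intro: AE_I2\<close>)
  then show ?thesis
    using assms(2) by (simp add: Int_absorb2 sets.sets_into_space)
qed

text \<open>The case distinction is needed because \<open>infdist x {} = 0\<close>.\<close>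

definition closed_approx :: "'a::metric_space set \<Rightarrow> nat \<Rightarrow> 'a \<Rightarrow> real" where
  "closed_approx A n x = (if A = {} then 0 else cutoff n (infdist x A))"

lemma closed_approx_bounds: "0 \<le> closed_approx A n x" "closed_approx A n x \<le> 1"
  unfolding closed_approx_def by (auto simp: cutoff_bounds)

lemma abs_closed_approx_le: "\<bar>closed_approx A n x\<bar> \<le> 1"
  using closed_approx_bounds[of A n x] by simp

lemma continuous_on_closed_approx: "continuous_on UNIV (closed_approx A n)"
proof (cases "A = {}")
  case False
  then show ?thesis
    unfolding closed_approx_def cutoff_def by (simp add: continuous_on_min continuous_on_max continuous_intros)
qed (simp add: closed_approx_def)

lemma closed_approx_in_CbT: "closed_approx A n \<in> CbT"
  unfolding CbT_def using closed_approx_bounds[of A n]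
  by (auto intro!: continuous_on_closed_approx bounded_real[THEN iffD2] exI[of _ 1])

lemma borel_measurable_closed_approx[measurable]: "closed_approx A n \<in> borel_measurable borel"
  by (rule borel_measurable_continuous_onI[OF continuous_on_closed_approx])

lemma closed_approx_tendsto_indicator:
  assumes "closed A"
  shows "(\<lambda>n. closed_approx A n x) \<longlonglongrightarrow> indicator A x"
proof (cases "A = {}")
  case False
  have "(\<lambda>n. closed_approx A n x) = (\<lambda>n. cutoff n (infdist x A))"
    using False by (simp add: closed_approx_def)
  moreover have "indicator A x = (if infdist x A \<le> 0 then 1 else (0::real))"
    using in_closed_iff_infdist_zero[OF assms False] infdist_nonneg[of x A] by auto
  ultimately show ?thesis
    using cutoff_tendsto by metis
qed (simp add: closed_approx_def)

section \<open>A countable generator of the Borel sets of \<open>\<Delta>(T)\<close>\<close>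

lemma space_prob_algebra_borel: "space (prob_algebra (borel::'a::topological_space measure)) = DeltaT"
  by (simp add: DeltaT_def)

lemma DeltaT_iff: "\<gamma> \<in> DeltaT \<longleftrightarrow> prob_space \<gamma> \<and> sets \<gamma> = sets borel"
  by (auto simp: DeltaT_def space_prob_algebra)

lemma DeltaT_in_sets: "DeltaT \<in> sets (prob_algebra (borel::'a::topological_space measure))"
  using sets.top[of "prob_algebra (borel::'a measure)"] by (simp add: space_prob_algebra_borel)

lemma integral_measurable_prob_algebra[measurable]:
  fixes f :: "'a \<Rightarrow> real"
  assumes [measurable]: "f \<in> borel_measurable N"
  shows "(\<lambda>M. \<integral>x. f x \<partial>M) \<in> borel_measurable (prob_algebra N)"
  unfolding prob_algebra_def by (intro measurable_restrict_space1) measurable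

lemma measurable_emeasure_of_measure:
  assumes "\<And>x. x \<in> space M \<Longrightarrow> prob_space (K x)"
    and "(\<lambda>x. measure (K x) A) \<in> borel_measurable M"
  shows "(\<lambda>x. emeasure (K x) A) \<in> borel_measurable M"
proof -
  have "(\<lambda>x. ennreal (measure (K x) A)) \<in> borel_measurable M"
    using assms(2) by measurable
  then show ?thesis
    by (rule measurable_cong[THEN iffD1, rotated])
      (simp add: assms(1) finite_measure.emeasure_eq_measure prob_space.finite_measure)
qed

definition cap_integral :: "(nat \<times> rat) list \<Rightarrow> nat \<Rightarrow> 'a::metric_space measure \<Rightarrow> real" where
  "cap_integral l n \<gamma> = (\<integral>x. closed_approx (cball_cap l) n x \<partial>\<gamma>)"

lemma borel_measurable_cap_integral[measurable]:
  "cap_integral l n \<in> borel_measurable (prob_algebra borel)"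
  unfolding cap_integral_def by measurable

lemma cap_integral_wconv: "wconv CbT \<beta>s \<beta> \<Longrightarrow> (\<lambda>k. cap_integral l n (\<beta>s k)) \<longlonglongrightarrow> cap_integral l n \<beta>"
  unfolding wconv_def cap_integral_def using closed_approx_in_CbT by blast

lemma cap_integral_tendsto:
  assumes "\<gamma> \<in> DeltaT"
  shows "(\<lambda>n. cap_integral l n \<gamma>) \<longlonglongrightarrow> measure \<gamma> (cball_cap l)"
proof -
  have \<gamma>: "prob_space \<gamma>" and [measurable_cong]: "sets \<gamma> = sets borel"
    using assms by (auto simp: DeltaT_iff)
  have "closed_approx (cball_cap l) n \<in> borel_measurable \<gamma>" for n
    by measurable
  then show ?thesis
    unfolding cap_integral_def
    using \<gamma> abs_closed_approx_le closed_approx_tendsto_indicator[OF closed_cball_cap]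
    by (intro integral_tendsto_measure) (auto simp: closed_cball_cap)
qed

type_synonym gen_index = "((nat \<times> rat) list \<times> nat) \<times> rat"

text \<open>\<open>gen_set L\<close> is the intersection of the weakly closed sets
  \<open>{\<gamma>. cap_integral l n \<gamma> \<le> q}\<close> for \<open>((l, n), q) \<in> set L\<close>.  Writing it as a sublevel
  set of the single weakly continuous function \<open>gen_fun L\<close> makes its indicator a
  pointwise limit of weakly continuous functions.\<close>

primrec gen_fun :: "gen_index list \<Rightarrow> 'a::metric_space measure \<Rightarrow> real" where
  "gen_fun [] = (\<lambda>\<gamma>. -1)"
| "gen_fun (k # L) = (case k of ((l, n), q) \<Rightarrow> \<lambda>\<gamma>. max (cap_integral l n \<gamma> - of_rat q) (gen_fun L \<gamma>))"

definition gen_set :: "gen_index list \<Rightarrow> 'a::metric_space measure set" where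
  "gen_set L = {\<gamma> \<in> DeltaT. gen_fun L \<gamma> \<le> 0}"

lemma borel_measurable_gen_fun[measurable]: "gen_fun L \<in> borel_measurable (prob_algebra borel)"
  by (induction L) (auto simp: split_paired_all)

lemma gen_fun_wconv: "wconv CbT \<beta>s \<beta> \<Longrightarrow> (\<lambda>k. gen_fun L (\<beta>s k)) \<longlonglongrightarrow> gen_fun L \<beta>"
  by (induction L) (auto simp: split_paired_all intro!: tendsto_intros cap_integral_wconv)

lemma gen_set_append: "gen_set (L @ L') = gen_set L \<inter> gen_set L'"
proof -
  have "gen_fun (L @ L') \<gamma> \<le> 0 \<longleftrightarrow> gen_fun L \<gamma> \<le> 0 \<and> gen_fun L' \<gamma> \<le> 0" for \<gamma> :: "'a measure"
    by (induction L) (auto simp: split_paired_all)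
  then show ?thesis
    unfolding gen_set_def by blast
qed

lemma Int_stable_gen_set: "Int_stable (range gen_set)"
  unfolding Int_stable_def by (auto simp: gen_set_append[symmetric])

lemma gen_set_Nil: "gen_set [] = DeltaT"
  unfolding gen_set_def by simp

lemma gen_set_subset: "range gen_set \<subseteq> Pow DeltaT"
  unfolding gen_set_def by auto

lemma gen_set_in_sets: "gen_set L \<in> sets (prob_algebra borel)"
proof -
  have "gen_set L = {\<gamma> \<in> space (prob_algebra borel). gen_fun L \<gamma> \<le> 0}"
    unfolding gen_set_def space_prob_algebra_borel ..
  also have "\<dots> \<in> sets (prob_algebra borel)"
    by measurable
  finally show ?thesis .
qed

lemma gen_set_single: "gen_set [((l, n), q)] = {\<gamma> \<in> DeltaT. cap_integral l n \<gamma> \<le> of_rat q}"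
  unfolding gen_set_def by auto

lemma measurable_cap_integral_gen_set:
  "(cap_integral l n :: 'a::metric_space measure \<Rightarrow> real) \<in> borel_measurable (sigma DeltaT (range gen_set))"
proof (subst borel_measurable_iff_le, intro allI)
  fix a :: real
  let ?Q = "sigma DeltaT (range (gen_set :: _ \<Rightarrow> 'a measure set))"
  define I where "I = {q::rat. a < of_rat q}"
  have "I \<noteq> {}"
    using Rats_dense_in_real[of a "a + 1"] by (auto simp: I_def elim!: Rats_cases)
  have space: "space ?Q = DeltaT"
    using gen_set_subset by (simp add: space_measure_of_conv)
  have sets: "sets ?Q = sigma_sets DeltaT (range gen_set)"
    using gen_set_subset by (rule sets_measure_of)
  have "{\<gamma> \<in> space ?Q. cap_integral l n \<gamma> \<le> a} = (\<Inter>q\<in>I. gen_set [((l, n), q)])"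
  proof (intro set_eqI iffI)
    fix \<gamma> :: "'a measure"
    assume "\<gamma> \<in> (\<Inter>q\<in>I. gen_set [((l, n), q)])"
    then have \<gamma>: "\<gamma> \<in> DeltaT" "\<And>q. a < of_rat q \<Longrightarrow> cap_integral l n \<gamma> \<le> of_rat q"
      using \<open>I \<noteq> {}\<close> unfolding gen_set_single I_def by auto
    have "cap_integral l n \<gamma> \<le> a"
    proof (rule ccontr)
      assume "\<not> cap_integral l n \<gamma> \<le> a"
      then obtain r where "r \<in> \<rat>" "a < r" "r < cap_integral l n \<gamma>"
        using Rats_dense_in_real[of a "cap_integral l n \<gamma>"] by auto
      then show False
        using \<gamma>(2) by (auto elim!: Rats_cases) (meson not_le)
    qed
    then show "\<gamma> \<in> {\<gamma> \<in> space ?Q. cap_integral l n \<gamma> \<le> a}"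
      using \<gamma> space by auto
  qed (auto simp: gen_set_single I_def space)
  also have "\<dots> \<in> sets ?Q"
    using \<open>I \<noteq> {}\<close> by (intro sets.countable_INT') (auto simp: sets intro: sigma_sets.Basic)
  finally show "{\<gamma> \<in> space ?Q. cap_integral l n \<gamma> \<le> a} \<in> sets ?Q" .
qed

lemma sets_prob_algebra_eq_gen_set:
  assumes "compact (UNIV :: 'a::metric_space set)"
  shows "sets (prob_algebra (borel :: 'a measure)) = sigma_sets DeltaT (range gen_set)"
proof
  show "sigma_sets DeltaT (range gen_set) \<subseteq> sets (prob_algebra (borel :: 'a measure))"
    by (rule sets.sigma_sets_subset'[of _ "prob_algebra borel", unfolded space_prob_algebra_borel])
      (auto simp: gen_set_in_sets DeltaT_in_sets)
next
  let ?Q = "sigma DeltaT (range (gen_set :: _ \<Rightarrow> 'a measure set))"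
  have space: "space ?Q = DeltaT"
    using gen_set_subset by (simp add: space_measure_of_conv)
  have sets: "sets ?Q = sigma_sets DeltaT (range gen_set)"
    using gen_set_subset by (rule sets_measure_of)
  have "(\<lambda>\<gamma>. \<gamma>) \<in> ?Q \<rightarrow>\<^sub>M prob_algebra borel"
  proof (rule measurable_prob_algebra_generated[where \<Omega>=UNIV and G="range cball_cap"])
    show "sets (borel::'a measure) = sigma_sets UNIV (range cball_cap)"
      by (rule sets_borel_eq_cball_cap[OF assms])
    show "prob_space \<gamma>" "sets \<gamma> = sets borel" if "\<gamma> \<in> space ?Q" for \<gamma>
      using that unfolding space DeltaT_iff by auto
    fix A :: "'a set"
    assume "A \<in> range cball_cap"
    then obtain l where A: "A = cball_cap l" by auto
    have "(\<lambda>\<gamma>. measure \<gamma> A) \<in> borel_measurable ?Q"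
      unfolding A
      by (rule borel_measurable_LIMSEQ_real[OF _ measurable_cap_integral_gen_set])
        (use cap_integral_tendsto space in auto)
    then show "(\<lambda>\<gamma>. emeasure \<gamma> A) \<in> borel_measurable ?Q"
      by (rule measurable_emeasure_of_measure[rotated]) (auto simp: space DeltaT_iff)
  qed (auto simp: Int_stable_cball_cap)
  note identity = this
  show "sets (prob_algebra (borel :: 'a measure)) \<subseteq> sigma_sets DeltaT (range gen_set)"
  proof
    fix E
    assume E: "E \<in> sets (prob_algebra (borel :: 'a measure))"
    have "(\<lambda>\<gamma>. \<gamma>) -` E \<inter> space ?Q = E"
      using sets.sets_into_space[OF E] by (auto simp: space space_prob_algebra_borel)
    then show "E \<in> sigma_sets DeltaT (range gen_set)"
      using measurable_sets[OF identity E] by (simp add: sets)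
  qed
qed

definition gen_cutoff :: "gen_index list \<Rightarrow> nat \<Rightarrow> 'a::metric_space measure \<Rightarrow> real" where
  "gen_cutoff L n \<gamma> = cutoff n (gen_fun L \<gamma>)"

lemma borel_measurable_gen_cutoff[measurable]: "gen_cutoff L n \<in> borel_measurable (prob_algebra borel)"
  unfolding gen_cutoff_def cutoff_def by measurable

lemma gen_cutoff_in_CbDelta: "gen_cutoff L n \<in> CbDelta"
  unfolding CbDelta_def
proof (intro CollectI conjI allI impI)
  show "bounded (gen_cutoff L n ` DeltaT)"
    unfolding bounded_real gen_cutoff_def using cutoff_bounds by (intro exI[of _ 1]) auto
  fix \<beta>s :: "nat \<Rightarrow> 'a measure" and \<beta>
  assume "(\<forall>n. \<beta>s n \<in> DeltaT) \<and> \<beta> \<in> DeltaT \<and> wconv CbT \<beta>s \<beta>"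
  then show "(\<lambda>k. gen_cutoff L n (\<beta>s k)) \<longlonglongrightarrow> gen_cutoff L n \<beta>"
    unfolding gen_cutoff_def cutoff_def by (intro tendsto_intros gen_fun_wconv) auto
qed

lemma gen_cutoff_tendsto_indicator:
  assumes "\<gamma> \<in> DeltaT"
  shows "(\<lambda>n. gen_cutoff L n \<gamma>) \<longlonglongrightarrow> indicator (gen_set L) \<gamma>"
proof -
  have "indicator (gen_set L) \<gamma> = (if gen_fun L \<gamma> \<le> 0 then 1 else (0::real))"
    using assms by (simp add: gen_set_def)
  then show ?thesis
    unfolding gen_cutoff_def using cutoff_tendsto by metis
qed

section \<open>Measurability of the belief map\<close>

lemma type_space_compact:
  fixes \<sigma> :: "'t::metric_space \<Rightarrow> real"
  shows "type_space \<sigma> \<tau> \<Longrightarrow> compact (UNIV :: 't set)"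
  unfolding type_space_def by blast

lemma type_space_sigma:
  assumes "type_space \<sigma> \<tau>"
  shows "\<sigma> \<in> borel_measurable borel" "\<bar>\<sigma> t\<bar> \<le> 2"
proof -
  have "continuous_on UNIV \<sigma>" "\<sigma> t \<in> {-1..2}"
    using assms unfolding type_space_def by blast+
  then show "\<sigma> \<in> borel_measurable borel" "\<bar>\<sigma> t\<bar> \<le> 2"
    by (auto intro: borel_measurable_continuous_onI)
qed

lemma type_space_belief:
  assumes "type_space \<sigma> \<tau>"
  shows "\<tau> t \<in> space (prob_algebra (prob_algebra borel))" "prob_space (\<tau> t)"
    "sets (\<tau> t) = sets (prob_algebra borel)" "space (\<tau> t) = DeltaT"
proof -
  show \<tau>: "\<tau> t \<in> space (prob_algebra (prob_algebra borel))"
    using assms unfolding type_space_def by blast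
  then show "prob_space (\<tau> t)" and sets: "sets (\<tau> t) = sets (prob_algebra borel)"
    by (auto simp: space_prob_algebra)
  show "space (\<tau> t) = DeltaT"
    using sets_eq_imp_space_eq[OF sets] by (simp add: space_prob_algebra_borel)
qed

lemma measurable_type_belief:
  fixes \<tau> :: "'t::metric_space \<Rightarrow> 't measure measure"
  assumes ts: "type_space \<sigma> \<tau>"
  shows "\<tau> \<in> borel \<rightarrow>\<^sub>M prob_algebra (prob_algebra borel)"
proof (rule measurable_prob_algebra_generated[where \<Omega>=DeltaT and G="range gen_set"])
  show "sets (prob_algebra (borel::'t measure)) = sigma_sets DeltaT (range gen_set)"
    by (rule sets_prob_algebra_eq_gen_set[OF type_space_compact[OF ts]])
  fix A :: "'t measure set"
  assume "A \<in> range gen_set"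
  then obtain L where A: "A = gen_set L" by auto
  have continuous: "(\<lambda>t. \<integral>\<gamma>. gen_cutoff L n \<gamma> \<partial>\<tau> t) \<in> borel_measurable borel" for n
  proof (rule borel_measurable_continuous_onI, rule continuous_on_sequentiallyI)
    fix u :: "nat \<Rightarrow> 't" and t
    assume "u \<longlonglongrightarrow> t"
    then have "wconv CbDelta (\<lambda>k. \<tau> (u k)) (\<tau> t)"
      using ts unfolding type_space_def by blast
    then show "(\<lambda>k. \<integral>\<gamma>. gen_cutoff L n \<gamma> \<partial>\<tau> (u k)) \<longlonglongrightarrow> (\<integral>\<gamma>. gen_cutoff L n \<gamma> \<partial>\<tau> t)"
      unfolding wconv_def using gen_cutoff_in_CbDelta by blast
  qed
  have "(\<lambda>n. \<integral>\<gamma>. gen_cutoff L n \<gamma> \<partial>\<tau> t) \<longlonglongrightarrow> measure (\<tau> t) (gen_set L)" for t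
  proof (rule integral_tendsto_measure)
    show "gen_cutoff L n \<in> borel_measurable (\<tau> t)" for n
      using type_space_belief(3)[OF ts] by (simp cong: measurable_cong_sets)
  qed (use type_space_belief[OF ts] gen_set_in_sets gen_cutoff_tendsto_indicator in
        \<open>auto simp: gen_cutoff_def abs_cutoff_le\<close>)
  then have "(\<lambda>t. measure (\<tau> t) A) \<in> borel_measurable borel"
    unfolding A by (rule borel_measurable_LIMSEQ_real[OF _ continuous])
  then show "(\<lambda>t. emeasure (\<tau> t) A) \<in> borel_measurable borel"
    by (rule measurable_emeasure_of_measure[rotated]) (rule type_space_belief(2)[OF ts])
qed (use type_space_belief[OF ts] in \<open>auto simp: Int_stable_gen_set gen_set_subset\<close>)

lemma measurable_belief_measure:
  assumes "type_space \<sigma> \<tau>" "E \<in> sets (prob_algebra borel)"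
  shows "(\<lambda>t. measure (\<tau> t) E) \<in> borel_measurable borel"
  by (rule measurable_compose[OF measurable_type_belief[OF assms(1)] measurable_measure_prob_algebra[OF assms(2)]])

lemma prob_algebra_measure_eqI_gen_set:
  assumes "compact (UNIV :: 'a::metric_space set)"
    and \<nu>: "\<nu> \<in> space (prob_algebra (prob_algebra (borel :: 'a measure)))"
    and \<nu>': "\<nu>' \<in> space (prob_algebra (prob_algebra (borel :: 'a measure)))"
    and eq: "\<And>L. measure \<nu> (gen_set L) = measure \<nu>' (gen_set L)"
  shows "\<nu> = \<nu>'"
proof (rule measure_eqI_generator_eq[where E="range gen_set" and \<Omega>=DeltaT and A="\<lambda>_. DeltaT"])
  have "prob_space \<nu>" "prob_space \<nu>'"
    and sets: "sets \<nu> = sets (prob_algebra borel)" "sets \<nu>' = sets (prob_algebra borel)"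
    using \<nu> \<nu>' by (auto simp: space_prob_algebra)
  then have finite: "finite_measure \<nu>" "finite_measure \<nu>'"
    by (auto intro: prob_space.finite_measure)
  show "sets \<nu> = sigma_sets DeltaT (range gen_set)" "sets \<nu>' = sigma_sets DeltaT (range gen_set)"
    using sets sets_prob_algebra_eq_gen_set[OF assms(1)] by auto
  show "emeasure \<nu> X = emeasure \<nu>' X" if "X \<in> range gen_set" for X
    using that eq finite by (auto simp: finite_measure.emeasure_eq_measure)
  show "emeasure \<nu> DeltaT \<noteq> \<infinity>"
    using finite(1) finite_measure.emeasure_finite by (metis infinity_ennreal_def)
  show "range (\<lambda>_. DeltaT) \<subseteq> range gen_set"
    by (auto intro: range_eqI[of _ gen_set "[]"] simp: gen_set_Nil)
qed (auto simp: Int_stable_gen_set gen_set_subset)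

lemma sets_consistent_graph:
  fixes \<tau> :: "'t::metric_space \<Rightarrow> 't measure measure"
  assumes ts: "type_space \<sigma> \<tau>"
  shows "{p \<in> space (borel \<Otimes>\<^sub>M prob_algebra DTA). distr (snd p) (prob_algebra borel) fst = \<tau> (fst p)}
         \<in> sets (borel \<Otimes>\<^sub>M prob_algebra (DTA :: ('t measure \<times> real) measure))"
proof -
  let ?N = "borel \<Otimes>\<^sub>M prob_algebra (DTA :: ('t measure \<times> real) measure)"
  let ?G = "\<lambda>L. fst -` gen_set L \<inter> space (DTA :: ('t measure \<times> real) measure)"
  have G: "?G L \<in> sets DTA" for L
    unfolding DTA_def by (rule measurable_sets[OF measurable_fst gen_set_in_sets])
  have "distr (snd p) (prob_algebra borel) fst = \<tau> (fst p) \<longleftrightarrow>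
      (\<forall>L. measure (snd p) (?G L) = measure (\<tau> (fst p)) (gen_set L))"
    if "p \<in> space ?N" for p
  proof -
    have "snd p \<in> space (prob_algebra DTA)"
      using that by (auto simp: space_pair_measure)
    then have "prob_space (snd p)" and sets: "sets (snd p) = sets DTA"
      by (auto simp: space_prob_algebra)
    then have fst: "fst \<in> snd p \<rightarrow>\<^sub>M prob_algebra (borel::'t measure)"
      unfolding DTA_def by (simp cong: measurable_cong_sets)
    have distr: "distr (snd p) (prob_algebra borel) fst \<in> space (prob_algebra (prob_algebra borel))"
      using \<open>prob_space (snd p)\<close> fst by (auto simp: space_prob_algebra intro: prob_space.prob_space_distr)
    have "measure (distr (snd p) (prob_algebra borel) fst) (gen_set L) = measure (snd p) (?G L)" for L
      using measure_distr[OF fst gen_set_in_sets[of L]] sets_eq_imp_space_eq[OF sets] by simp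
    then show ?thesis
      using prob_algebra_measure_eqI_gen_set[OF type_space_compact[OF ts] distr type_space_belief(1)[OF ts]]
      by metis
  qed
  then have "{p \<in> space ?N. distr (snd p) (prob_algebra borel) fst = \<tau> (fst p)} =
      (\<Inter>L. {p \<in> space ?N. measure (snd p) (?G L) = measure (\<tau> (fst p)) (gen_set L)})"
    by blast
  also have "\<dots> \<in> sets ?N"
  proof -
    have "{p \<in> space ?N. measure (snd p) (?G L) = measure (\<tau> (fst p)) (gen_set L)} \<in> sets ?N" for L
    proof (rule measurable_equality_set)
      show "(\<lambda>p. measure (snd p) (?G L)) \<in> borel_measurable ?N"
        by (rule measurable_compose[OF measurable_snd measurable_measure_prob_algebra[OF G]])
      show "(\<lambda>p. measure (\<tau> (fst p)) (gen_set L)) \<in> borel_measurable ?N"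
        by (rule measurable_compose[OF measurable_fst measurable_belief_measure[OF ts gen_set_in_sets]])
    qed
    then show ?thesis
      by (intro sets.countable_INT') auto
  qed
  finally show ?thesis .
qed

lemma integrable_belief_measure:
  assumes ts: "type_space \<sigma> \<tau>" and "\<beta> \<in> DeltaT" "E \<in> sets (prob_algebra borel)"
  shows "integrable \<beta> (\<lambda>t. measure (\<tau> t) E)"
proof -
  interpret prob_space \<beta>
    using assms(2) by (simp add: DeltaT_iff)
  show ?thesis
  proof (rule integrable_const_bound[where B=1])
    have "sets \<beta> = sets borel"
      using assms(2) by (simp add: DeltaT_iff)
    then show "(\<lambda>t. measure (\<tau> t) E) \<in> borel_measurable \<beta>"
      using measurable_belief_measure[OF ts assms(3)] by (simp cong: measurable_cong_sets)
  qed (use prob_space.prob_le_1[OF type_space_belief(2)[OF ts]] in simp)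
qed

lemma Fb_compl:
  assumes ts: "type_space \<sigma> \<tau>" and "\<beta> \<in> DeltaT" "E \<in> sets (prob_algebra borel)"
  shows "Fb \<tau> \<beta> (DeltaT - E) = 1 - Fb \<tau> \<beta> E"
proof -
  interpret prob_space \<beta>
    using assms(2) by (simp add: DeltaT_iff)
  have "measure (\<tau> t) (DeltaT - E) = 1 - measure (\<tau> t) E" for t
    using prob_space.prob_compl[OF type_space_belief(2)[OF ts], of E] assms(3)
      type_space_belief(3,4)[OF ts] by simp
  then show ?thesis
    unfolding Fb_def using integrable_belief_measure[OF assms] by (simp add: prob_space)
qed

lemma Fb_mono:
  assumes ts: "type_space \<sigma> \<tau>" and "\<beta> \<in> DeltaT"
    and "E \<in> sets (prob_algebra borel)" "E' \<in> sets (prob_algebra borel)" "E \<subseteq> E'"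
  shows "Fb \<tau> \<beta> E \<le> Fb \<tau> \<beta> E'"
  unfolding Fb_def
  using assms finite_measure.finite_measure_mono[OF prob_space.finite_measure[OF type_space_belief(2)[OF ts]]]
    type_space_belief(3)[OF ts]
  by (intro integral_mono integrable_belief_measure[OF ts]) auto

lemma borel_measurable_Fb:
  assumes "type_space \<sigma> \<tau>" "E \<in> sets (prob_algebra borel)"
  shows "(\<lambda>\<gamma>. Fb \<tau> \<gamma> E) \<in> borel_measurable (prob_algebra borel)"
  unfolding Fb_def using measurable_belief_measure[OF assms] by (rule integral_measurable_prob_algebra)

lemma borel_measurable_xb:
  assumes "type_space \<sigma> \<tau>"
  shows "xb \<sigma> \<in> borel_measurable (prob_algebra borel)"
  unfolding xb_def[abs_def] using type_space_sigma(1)[OF assms] by (rule integral_measurable_prob_algebra)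

lemma Bop_iterate_in_sets:
  assumes ts: "type_space \<sigma> \<tau>" and f: "f \<in> borel_measurable (prob_algebra borel)"
  shows "(Bop \<tau> f ^^ m) DeltaT \<in> sets (prob_algebra borel)"
proof (induction m)
  case (Suc m)
  let ?E = "(Bop \<tau> f ^^ m) DeltaT"
  have "Bop \<tau> f ?E = ?E \<inter> {\<gamma> \<in> space (prob_algebra borel). f \<gamma> \<le> Fb \<tau> \<gamma> ?E}"
    unfolding Bop_def[of \<tau> f ?E] using sets.sets_into_space[OF Suc] by blast
  also have "\<dots> \<in> sets (prob_algebra borel)"
    by (intro sets.Int[OF Suc] borel_measurable_le[OF f borel_measurable_Fb[OF ts Suc]])
  finally show ?case by simp
qed (simp add: DeltaT_in_sets)

lemma mem_Cop_iff:
  assumes "\<beta> \<in> E"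
  shows "\<beta> \<in> Cop \<tau> f E \<longleftrightarrow> (\<forall>m. \<beta> \<in> (Bop \<tau> f ^^ m) E)"
proof
  assume "\<beta> \<in> Cop \<tau> f E"
  then have "\<beta> \<in> (Bop \<tau> f ^^ Suc n) E" for n
    unfolding Cop_def by blast
  then show "\<forall>m. \<beta> \<in> (Bop \<tau> f ^^ m) E"
    using assms by (metis funpow_0 not0_implies_Suc)
next
  assume "\<forall>m. \<beta> \<in> (Bop \<tau> f ^^ m) E"
  then show "\<beta> \<in> Cop \<tau> f E"
    unfolding Cop_def by blast
qed

section \<open>Conjectures and best replies\<close>

lemma space_DTA: "space (DTA :: ('a::topological_space measure \<times> real) measure) = DeltaT \<times> Act"
  by (simp add: DTA_def space_pair_measure space_prob_algebra_borel)

lemma sets_DTA_Times: "E \<in> sets (prob_algebra borel) \<Longrightarrow> A \<subseteq> Act \<Longrightarrow> E \<times> A \<in> sets DTA"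
  unfolding DTA_def by (intro pair_measureI) auto

abbreviation invest_share :: "('t::topological_space measure \<times> real) measure \<Rightarrow> real" where
  "invest_share \<kappa> \<equiv> measure \<kappa> (DeltaT \<times> {1})"

abbreviation expected_payoff ::
    "('t::topological_space \<Rightarrow> real) \<Rightarrow> ('t \<times> ('t measure \<times> real) measure) measure \<Rightarrow> real \<Rightarrow> real" where
  "expected_payoff \<sigma> \<mu> a \<equiv> \<integral>p. payoff a (\<sigma> (fst p)) (invest_share (snd p)) \<partial>\<mu>"

lemma invest_event_in_sets: "DeltaT \<times> {1} \<in> sets DTA"
  by (intro sets_DTA_Times DeltaT_in_sets) (auto simp: Act_def)

lemma borel_measurable_invest_share[measurable]:
  "invest_share \<in> borel_measurable (prob_algebra (DTA :: ('t::topological_space measure \<times> real) measure))"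
  by (intro measurable_measure_prob_algebra invest_event_in_sets)

definition conjecture :: "('t::topological_space \<Rightarrow> 't measure measure) \<Rightarrow> ('t measure \<Rightarrow> real set)
      \<Rightarrow> 't measure \<Rightarrow> ('t \<times> ('t measure \<times> real) measure) measure \<Rightarrow> bool" where
  "conjecture \<tau> S \<beta> \<mu> \<longleftrightarrow> \<mu> \<in> space (prob_algebra (borel \<Otimes>\<^sub>M prob_algebra DTA)) \<and>
     distr \<mu> borel fst = \<beta> \<and> (AE p in \<mu>. snd p \<in> Dset \<tau> S (fst p))"

lemma mem_Sstep_iff:
  "1 \<in> Sstep \<sigma> \<tau> S \<beta> \<longleftrightarrow> (\<exists>\<mu>. conjecture \<tau> S \<beta> \<mu> \<and> 0 \<le> expected_payoff \<sigma> \<mu> 1)"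
  "0 \<in> Sstep \<sigma> \<tau> S \<beta> \<longleftrightarrow> (\<exists>\<mu>. conjecture \<tau> S \<beta> \<mu> \<and> expected_payoff \<sigma> \<mu> 1 \<le> 0)"
  by (auto simp: Sstep_def conjecture_def Act_def payoff_def[of 0])

lemma conjecture_integral_fst:
  fixes g :: "'t::topological_space \<Rightarrow> real"
  assumes "conjecture \<tau> S \<beta> \<mu>" and [measurable]: "g \<in> borel_measurable borel"
  shows "(\<integral>p. g (fst p) \<partial>\<mu>) = (\<integral>t. g t \<partial>\<beta>)"
proof -
  have "sets \<mu> = sets (borel \<Otimes>\<^sub>M prob_algebra DTA)"
    using assms(1) by (simp add: conjecture_def space_prob_algebra)
  then have "fst \<in> \<mu> \<rightarrow>\<^sub>M borel"
    by (simp cong: measurable_cong_sets)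
  then show ?thesis
    using assms(1) integral_distr[of fst \<mu> borel g] by (simp add: conjecture_def)
qed

lemma conjecture_integrable_invest_share:
  assumes "conjecture \<tau> S \<beta> \<mu>"
  shows "integrable \<mu> (\<lambda>p. invest_share (snd p))"
proof -
  have \<mu>: "prob_space \<mu>" and [measurable_cong]: "sets \<mu> = sets (borel \<Otimes>\<^sub>M prob_algebra DTA)"
    using assms by (auto simp: conjecture_def space_prob_algebra)
  have "prob_space (snd p)" if "p \<in> space \<mu>" for p
    using that sets_eq_imp_space_eq[OF \<open>sets \<mu> = _\<close>]
    by (auto simp: space_pair_measure space_prob_algebra)
  then show ?thesis
    using \<mu> measurable_compose[OF measurable_snd borel_measurable_invest_share]
    by (intro finite_measure.integrable_const_bound[where B=1] AE_I2 prob_space.finite_measure)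
      (auto simp: prob_space.prob_le_1)
qed

lemma expected_payoff_invest:
  assumes ts: "type_space \<sigma> \<tau>" and conj: "conjecture \<tau> S \<beta> \<mu>"
  shows "expected_payoff \<sigma> \<mu> 1 = xb \<sigma> \<beta> + (\<integral>p. invest_share (snd p) \<partial>\<mu>) - 1"
proof -
  interpret prob_space \<mu>
    using conj by (simp add: conjecture_def space_prob_algebra)
  have [measurable_cong]: "sets \<mu> = sets (borel \<Otimes>\<^sub>M prob_algebra DTA)"
    using conj by (simp add: conjecture_def space_prob_algebra)
  have [measurable]: "\<sigma> \<in> borel_measurable borel"
    by (rule type_space_sigma(1)[OF ts])
  have "integrable \<mu> (\<lambda>p. \<sigma> (fst p))"
    using type_space_sigma(2)[OF ts] by (intro integrable_const_bound[where B=2]) auto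
  then show ?thesis
    using conjecture_integrable_invest_share[OF conj] conjecture_integral_fst[OF conj, of \<sigma>]
    by (simp add: payoff_def xb_def prob_space)
qed

definition admits :: "('t::topological_space measure \<Rightarrow> real set) \<Rightarrow> real \<Rightarrow> 't measure set" where
  "admits S a = {\<gamma> \<in> DeltaT. a \<in> S \<gamma>}"

definition select_kernel :: "('t::topological_space \<Rightarrow> 't measure measure) \<Rightarrow> 't measure set
      \<Rightarrow> 't \<Rightarrow> ('t measure \<times> real) measure" where
  "select_kernel \<tau> E t = distr (\<tau> t) DTA (\<lambda>\<gamma>. (\<gamma>, indicator E \<gamma>))"

lemma measurable_select_pair:
  assumes "E \<in> sets (prob_algebra borel)"
  shows "(\<lambda>\<gamma>. (\<gamma>, indicator E \<gamma>)) \<in> prob_algebra borel \<rightarrow>\<^sub>M DTA"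
proof -
  have "(\<lambda>\<gamma>. if \<gamma> \<in> E then 1 else 0 :: real) \<in> prob_algebra borel \<rightarrow>\<^sub>M count_space Act"
    using assms by (intro measurable_If_set) (auto simp: Act_def)
  then show ?thesis
    unfolding DTA_def indicator_def of_bool_def by (intro measurable_Pair measurable_id)
qed

lemma measurable_select_kernel:
  assumes "type_space \<sigma> \<tau>" "E \<in> sets (prob_algebra borel)"
  shows "select_kernel \<tau> E \<in> borel \<rightarrow>\<^sub>M prob_algebra DTA"
  unfolding select_kernel_def
  using measurable_compose[OF measurable_type_belief[OF assms(1)]
      measurable_distr_prob_space[OF measurable_select_pair[OF assms(2)]]]
  by simp

lemma measurable_select_pair_belief:
  assumes "type_space \<sigma> \<tau>" "E \<in> sets (prob_algebra borel)"
  shows "(\<lambda>\<gamma>. (\<gamma>, indicator E \<gamma>)) \<in> \<tau> t \<rightarrow>\<^sub>M DTA"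
  using measurable_select_pair[OF assms(2)] type_space_belief(3)[OF assms(1)]
  by (simp cong: measurable_cong_sets)

lemma distr_fst_select_kernel:
  assumes ts: "type_space \<sigma> \<tau>" and E: "E \<in> sets (prob_algebra borel)"
  shows "distr (select_kernel \<tau> E t) (prob_algebra borel) fst = \<tau> t"
proof -
  have "distr (select_kernel \<tau> E t) (prob_algebra borel) fst = distr (\<tau> t) (prob_algebra borel) (\<lambda>\<gamma>. \<gamma>)"
    unfolding select_kernel_def
    by (subst distr_distr[OF _ measurable_select_pair_belief[OF assms]]) (auto simp: DTA_def comp_def)
  then show ?thesis
    using type_space_belief(3)[OF ts] by (simp add: distr_id2)
qed

lemma measure_select_kernel:
  assumes ts: "type_space \<sigma> \<tau>" and E: "E \<in> sets (prob_algebra borel)" and X: "X \<in> sets DTA"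
  shows "measure (select_kernel \<tau> E t) X = measure (\<tau> t) {\<gamma> \<in> DeltaT. (\<gamma>, indicator E \<gamma>) \<in> X}"
proof -
  have "(\<lambda>\<gamma>. (\<gamma>, indicator E \<gamma>)) -` X \<inter> DeltaT = {\<gamma> \<in> DeltaT. (\<gamma>, indicator E \<gamma>) \<in> X}"
    by auto
  then show ?thesis
    unfolding select_kernel_def measure_distr[OF measurable_select_pair_belief[OF ts E] X]
      type_space_belief(4)[OF ts]
    by simp
qed

lemma Dset_measure_Times_Act:
  assumes ts: "type_space \<sigma> \<tau>" and "\<kappa> \<in> Dset \<tau> S t" and A: "A \<in> sets (prob_algebra borel)"
  shows "measure \<kappa> (A \<times> Act) = measure (\<tau> t) A"
proof -
  have \<kappa>: "\<kappa> \<in> space (prob_algebra DTA)" "distr \<kappa> (prob_algebra borel) fst = \<tau> t"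
    using assms(2) by (auto simp: Dset_def)
  then have sets: "sets \<kappa> = sets DTA"
    by (simp add: space_prob_algebra)
  then have fst: "fst \<in> \<kappa> \<rightarrow>\<^sub>M prob_algebra borel"
    unfolding DTA_def by (simp cong: measurable_cong_sets)
  have "fst -` A \<inter> space \<kappa> = A \<times> Act"
    using sets.sets_into_space[OF A] sets_eq_imp_space_eq[OF sets]
    by (auto simp: space_DTA space_prob_algebra_borel)
  then show ?thesis
    using measure_distr[OF fst A] \<kappa>(2) by simp
qed

locale rationalizability_round =
  fixes \<sigma> :: "'t::metric_space \<Rightarrow> real" and \<tau> :: "'t \<Rightarrow> 't measure measure"
    and S :: "'t measure \<Rightarrow> real set"
  assumes type_space: "type_space \<sigma> \<tau>"
    and S_subset_Act: "\<And>\<gamma>. S \<gamma> \<subseteq> Act"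
    and S_nonempty: "\<And>\<gamma>. \<gamma> \<in> DeltaT \<Longrightarrow> S \<gamma> \<noteq> {}"
    and admits_invest_in_sets: "admits S 1 \<in> sets (prob_algebra borel)"
    and admits_noninvest_in_sets: "admits S 0 \<in> sets (prob_algebra borel)"
begin

lemma compl_admits_noninvest: "DeltaT - admits S 0 \<subseteq> admits S 1"
  using S_subset_Act S_nonempty by (fastforce simp: admits_def Act_def)

lemma act_graph_eq: "{q \<in> space DTA. snd q \<in> S (fst q)} = admits S 1 \<times> {1} \<union> admits S 0 \<times> {0}"
  using S_subset_Act by (fastforce simp: space_DTA admits_def Act_def)

lemma act_graph_in_sets: "{q \<in> space DTA. snd q \<in> S (fst q)} \<in> sets DTA"
  unfolding act_graph_eq
  using admits_invest_in_sets admits_noninvest_in_sets by (intro sets.Un sets_DTA_Times) (auto simp: Act_def)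

lemma Dset_iff:
  "\<kappa> \<in> Dset \<tau> S t \<longleftrightarrow> \<kappa> \<in> space (prob_algebra DTA) \<and> distr \<kappa> (prob_algebra borel) fst = \<tau> t \<and>
     measure \<kappa> {q \<in> space DTA. snd q \<in> S (fst q)} = 1"
proof -
  have "(AE q in \<kappa>. snd q \<in> S (fst q)) \<longleftrightarrow> measure \<kappa> {q \<in> space DTA. snd q \<in> S (fst q)} = 1"
    if "\<kappa> \<in> space (prob_algebra DTA)"
  proof -
    have "prob_space \<kappa>" and sets: "sets \<kappa> = sets DTA"
      using that by (auto simp: space_prob_algebra)
    then show ?thesis
      using prob_space.prob_Collect_eq_1[of \<kappa> "\<lambda>q. snd q \<in> S (fst q)"] act_graph_in_sets
        sets_eq_imp_space_eq[OF sets] by simp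
  qed
  then show ?thesis
    unfolding Dset_def by blast
qed

text \<open>As \<open>\<kappa>\<close> lives on the graph of \<open>S\<close> and has marginal \<open>\<tau> t\<close>,
  \<open>\<kappa>(\<Delta> \<times> {1}) \<le> \<kappa>(E\<^sub>1 \<times> {1}) \<le> \<tau> t (E\<^sub>1)\<close> and
  \<open>\<kappa>(\<Delta> \<times> {0}) \<le> \<kappa>(E\<^sub>0 \<times> {0}) \<le> \<tau> t (E\<^sub>0)\<close>, where \<open>E\<^sub>a = admits S a\<close>.\<close>

lemma Dset_invest_share_bounds:
  assumes "\<kappa> \<in> Dset \<tau> S t"
  shows "1 - measure (\<tau> t) (admits S 0) \<le> invest_share \<kappa>"
    and "invest_share \<kappa> \<le> measure (\<tau> t) (admits S 1)"
proof -
  let ?E1 = "admits S 1" and ?E0 = "admits S 0"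
  have \<kappa>: "\<kappa> \<in> space (prob_algebra DTA)"
    and graph: "measure \<kappa> (?E1 \<times> {1} \<union> ?E0 \<times> {0}) = 1"
    using assms unfolding Dset_iff act_graph_eq by auto
  interpret prob_space \<kappa>
    using \<kappa> by (simp add: space_prob_algebra)
  have Times: "A \<times> B \<in> events" if "A \<in> sets (prob_algebra borel)" "B \<subseteq> Act" for A B
    using that \<kappa> by (simp add: space_prob_algebra sets_DTA_Times)
  note marginal = Dset_measure_Times_Act[OF type_space assms]
  have E1: "?E1 \<in> sets (prob_algebra borel)" and E0: "?E0 \<in> sets (prob_algebra borel)"
    and \<Delta>: "DeltaT \<in> sets (prob_algebra borel)"
    by (fact admits_invest_in_sets admits_noninvest_in_sets DeltaT_in_sets)+
  have "measure \<kappa> (?E1 \<times> {1} \<union> ?E0 \<times> {0}) \<le> measure \<kappa> (?E1 \<times> {1}) + measure \<kappa> (?E0 \<times> {0})"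
    by (intro measure_Un_le Times E1 E0) (auto simp: Act_def)
  moreover have "measure \<kappa> (?E0 \<times> {0}) \<le> measure \<kappa> (DeltaT \<times> {0})"
    and "measure \<kappa> (?E1 \<times> {1}) \<le> measure \<kappa> (DeltaT \<times> {1})"
    by (intro finite_measure_mono Times \<Delta>; auto simp: Act_def admits_def)+
  moreover have "measure \<kappa> (DeltaT \<times> {1}) + measure \<kappa> (DeltaT \<times> {0}) = 1"
  proof -
    have split: "DeltaT \<times> Act = DeltaT \<times> {1} \<union> DeltaT \<times> {0::real}"
      by (auto simp: Act_def)
    have "measure \<kappa> (DeltaT \<times> Act) = measure \<kappa> (DeltaT \<times> {1}) + measure \<kappa> (DeltaT \<times> {0})"
      unfolding split by (rule finite_measure_Union) (auto intro!: Times[OF \<Delta>] simp: Act_def)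
    moreover have "measure (\<tau> t) DeltaT = 1"
      using prob_space.prob_space[OF type_space_belief(2)[OF type_space]] type_space_belief(4)[OF type_space]
      by simp
    ultimately show ?thesis
      using marginal[OF \<Delta>] by linarith
  qed
  moreover have "measure \<kappa> (?E1 \<times> {1}) \<le> measure \<kappa> (?E1 \<times> Act)"
    and "measure \<kappa> (?E0 \<times> {0}) \<le> measure \<kappa> (?E0 \<times> Act)"
    by (intro finite_measure_mono Times E1 E0; auto simp: Act_def)+
  ultimately show "1 - measure (\<tau> t) ?E0 \<le> invest_share \<kappa>"
    and "invest_share \<kappa> \<le> measure (\<tau> t) ?E1"
    using graph marginal[OF E1] marginal[OF E0] by linarith+
qed

lemma conjecture_invest_share_bounds:
  assumes conj: "conjecture \<tau> S \<beta> \<mu>"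
  shows "1 - Fb \<tau> \<beta> (admits S 0) \<le> (\<integral>p. invest_share (snd p) \<partial>\<mu>)"
    and "(\<integral>p. invest_share (snd p) \<partial>\<mu>) \<le> Fb \<tau> \<beta> (admits S 1)"
proof -
  have \<mu>: "prob_space \<mu>" and [measurable_cong]: "sets \<mu> = sets (borel \<Otimes>\<^sub>M prob_algebra DTA)"
    and \<beta>: "distr \<mu> borel fst = \<beta>" and AE: "AE p in \<mu>. snd p \<in> Dset \<tau> S (fst p)"
    using conj by (auto simp: conjecture_def space_prob_algebra)
  interpret prob_space \<mu> by (fact \<mu>)
  have [measurable]: "\<tau> \<in> borel \<rightarrow>\<^sub>M prob_algebra (prob_algebra borel)"
    by (rule measurable_type_belief[OF type_space])
  have integrable: "integrable \<mu> (\<lambda>p. measure (\<tau> (fst p)) E)" if [measurable]: "E \<in> sets (prob_algebra borel)" for E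
    using prob_space.prob_le_1[OF type_space_belief(2)[OF type_space]]
    by (intro integrable_const_bound[where B=1]) auto
  have Fb: "(\<integral>p. measure (\<tau> (fst p)) E \<partial>\<mu>) = Fb \<tau> \<beta> E" if "E \<in> sets (prob_algebra borel)" for E
    unfolding Fb_def using conjecture_integral_fst[OF conj measurable_belief_measure[OF type_space that]] .
  have "(\<integral>p. 1 - measure (\<tau> (fst p)) (admits S 0) \<partial>\<mu>) \<le> (\<integral>p. invest_share (snd p) \<partial>\<mu>)"
    using AE Dset_invest_share_bounds(1)
    by (intro integral_mono_AE integrable[OF admits_noninvest_in_sets] conjecture_integrable_invest_share[OF conj])
      (auto elim!: eventually_mono intro!: Bochner_Integration.integrable_diff
        integrable[OF admits_noninvest_in_sets])
  then show "1 - Fb \<tau> \<beta> (admits S 0) \<le> (\<integral>p. invest_share (snd p) \<partial>\<mu>)"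
    using integrable[OF admits_noninvest_in_sets] Fb[OF admits_noninvest_in_sets] by (simp add: prob_space)
  have "(\<integral>p. invest_share (snd p) \<partial>\<mu>) \<le> (\<integral>p. measure (\<tau> (fst p)) (admits S 1) \<partial>\<mu>)"
    using AE Dset_invest_share_bounds(2)
    by (intro integral_mono_AE integrable[OF admits_invest_in_sets] conjecture_integrable_invest_share[OF conj])
      (auto elim!: eventually_mono)
  then show "(\<integral>p. invest_share (snd p) \<partial>\<mu>) \<le> Fb \<tau> \<beta> (admits S 1)"
    using Fb[OF admits_invest_in_sets] by simp
qed

lemma Dset_graph_in_sets:
  "{p \<in> space (borel \<Otimes>\<^sub>M prob_algebra DTA). snd p \<in> Dset \<tau> S (fst p)}
     \<in> sets (borel \<Otimes>\<^sub>M prob_algebra (DTA :: ('t measure \<times> real) measure))"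
proof -
  let ?N = "borel \<Otimes>\<^sub>M prob_algebra (DTA :: ('t measure \<times> real) measure)"
  have "{p \<in> space ?N. snd p \<in> Dset \<tau> S (fst p)} =
     {p \<in> space ?N. distr (snd p) (prob_algebra borel) fst = \<tau> (fst p)} \<inter>
     {p \<in> space ?N. measure (snd p) {q \<in> space DTA. snd q \<in> S (fst q)} = 1}"
    unfolding Dset_iff by (auto simp: space_pair_measure)
  also have "\<dots> \<in> sets ?N"
  proof (rule sets.Int)
    have "(\<lambda>p. measure (snd p) {q \<in> space DTA. snd q \<in> S (fst q)}) \<in> borel_measurable ?N"
      by (rule measurable_compose[OF measurable_snd measurable_measure_prob_algebra[OF act_graph_in_sets]])
    then show "{p \<in> space ?N. measure (snd p) {q \<in> space DTA. snd q \<in> S (fst q)} = 1} \<in> sets ?N"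
      by (intro measurable_equality_set) auto
  qed (rule sets_consistent_graph[OF type_space])
  finally show ?thesis .
qed

lemma select_kernel_in_Dset:
  assumes E: "E \<in> sets (prob_algebra borel)" and "DeltaT - admits S 0 \<subseteq> E" "E \<subseteq> admits S 1"
  shows "select_kernel \<tau> E t \<in> Dset \<tau> S t"
proof -
  have "{\<gamma> \<in> DeltaT. (\<gamma>, indicator E \<gamma>) \<in> {q \<in> space DTA. snd q \<in> S (fst q)}} = DeltaT"
    using assms(2,3) by (auto simp: space_DTA admits_def Act_def indicator_def)
  then have "measure (select_kernel \<tau> E t) {q \<in> space DTA. snd q \<in> S (fst q)} = 1"
    using measure_select_kernel[OF type_space E act_graph_in_sets]
      prob_space.prob_space[OF type_space_belief(2)[OF type_space]] type_space_belief(4)[OF type_space]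
    by simp
  then show ?thesis
    using measurable_space[OF measurable_select_kernel[OF type_space E]] distr_fst_select_kernel[OF type_space E]
    by (auto simp: Dset_iff)
qed

lemma exists_conjecture:
  assumes \<beta>: "\<beta> \<in> DeltaT" and E: "E \<in> sets (prob_algebra borel)"
    and "DeltaT - admits S 0 \<subseteq> E" "E \<subseteq> admits S 1"
  shows "\<exists>\<mu>. conjecture \<tau> S \<beta> \<mu> \<and> (\<integral>p. invest_share (snd p) \<partial>\<mu>) = Fb \<tau> \<beta> E"
proof -
  let ?N = "borel \<Otimes>\<^sub>M prob_algebra (DTA :: ('t measure \<times> real) measure)"
  let ?\<kappa> = "select_kernel \<tau> E"
  define \<mu> where "\<mu> = distr \<beta> ?N (\<lambda>t. (t, ?\<kappa> t))"
  have \<beta>': "prob_space \<beta>" "sets \<beta> = sets borel"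
    using \<beta> by (auto simp: DeltaT_iff)
  have F: "(\<lambda>t. (t, ?\<kappa> t)) \<in> \<beta> \<rightarrow>\<^sub>M ?N"
    using measurable_select_kernel[OF type_space E] \<beta>'(2)
    by (simp cong: measurable_cong_sets)
  have "AE t in \<beta>. ?\<kappa> t \<in> Dset \<tau> S t"
    using select_kernel_in_Dset[OF E assms(3,4)] by simp
  then have "AE p in \<mu>. snd p \<in> Dset \<tau> S (fst p)"
    unfolding \<mu>_def using Dset_graph_in_sets sets.sets_into_space
    by (subst AE_distr_iff[OF F]) (auto simp: Int_absorb1 Collect_conj_eq Int_commute)
  moreover have "\<mu> \<in> space (prob_algebra ?N)"
    unfolding \<mu>_def space_prob_algebra using prob_space.prob_space_distr[OF \<beta>'(1) F] by simp
  moreover have "distr \<mu> borel fst = \<beta>"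
    unfolding \<mu>_def using distr_distr[OF measurable_fst F] \<beta>'(2) by (simp add: comp_def distr_id2)
  moreover have "(\<integral>p. invest_share (snd p) \<partial>\<mu>) = Fb \<tau> \<beta> E"
  proof -
    have "{\<gamma> \<in> DeltaT. (\<gamma>, indicator E \<gamma> :: real) \<in> DeltaT \<times> {1}} = E"
      using sets.sets_into_space[OF E] by (auto simp: space_prob_algebra_borel indicator_def)
    then have "invest_share (?\<kappa> t) = measure (\<tau> t) E" for t
      using measure_select_kernel[OF type_space E invest_event_in_sets] by simp
    then show ?thesis
      unfolding \<mu>_def Fb_def
      using integral_distr[OF F measurable_compose[OF measurable_snd borel_measurable_invest_share]]
      by simp
  qed
  ultimately show ?thesis
    unfolding conjecture_def by blast
qed

lemma invest_in_Sstep_iff: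
  assumes "\<beta> \<in> DeltaT"
  shows "1 \<in> Sstep \<sigma> \<tau> S \<beta> \<longleftrightarrow> 1 - xb \<sigma> \<beta> \<le> Fb \<tau> \<beta> (admits S 1)"
proof
  assume "1 \<in> Sstep \<sigma> \<tau> S \<beta>"
  then obtain \<mu> where conj: "conjecture \<tau> S \<beta> \<mu>" and "0 \<le> expected_payoff \<sigma> \<mu> 1"
    unfolding mem_Sstep_iff by blast
  then show "1 - xb \<sigma> \<beta> \<le> Fb \<tau> \<beta> (admits S 1)"
    using expected_payoff_invest[OF type_space conj] conjecture_invest_share_bounds(2)[OF conj]
    by linarith
next
  assume "1 - xb \<sigma> \<beta> \<le> Fb \<tau> \<beta> (admits S 1)"
  moreover obtain \<mu> where conj: "conjecture \<tau> S \<beta> \<mu>"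
    and "(\<integral>p. invest_share (snd p) \<partial>\<mu>) = Fb \<tau> \<beta> (admits S 1)"
    using exists_conjecture[OF assms admits_invest_in_sets compl_admits_noninvest] by blast
  ultimately have "0 \<le> expected_payoff \<sigma> \<mu> 1"
    using expected_payoff_invest[OF type_space conj] by linarith
  with conj show "1 \<in> Sstep \<sigma> \<tau> S \<beta>"
    unfolding mem_Sstep_iff by blast
qed

lemma noninvest_in_Sstep_iff:
  assumes "\<beta> \<in> DeltaT"
  shows "0 \<in> Sstep \<sigma> \<tau> S \<beta> \<longleftrightarrow> xb \<sigma> \<beta> \<le> Fb \<tau> \<beta> (admits S 0)"
proof
  assume "0 \<in> Sstep \<sigma> \<tau> S \<beta>"
  then obtain \<mu> where conj: "conjecture \<tau> S \<beta> \<mu>" and "expected_payoff \<sigma> \<mu> 1 \<le> 0"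
    unfolding mem_Sstep_iff by blast
  then show "xb \<sigma> \<beta> \<le> Fb \<tau> \<beta> (admits S 0)"
    using expected_payoff_invest[OF type_space conj] conjecture_invest_share_bounds(1)[OF conj]
    by linarith
next
  have E: "DeltaT - admits S 0 \<in> sets (prob_algebra borel)"
    using DeltaT_in_sets admits_noninvest_in_sets by blast
  assume "xb \<sigma> \<beta> \<le> Fb \<tau> \<beta> (admits S 0)"
  moreover obtain \<mu> where conj: "conjecture \<tau> S \<beta> \<mu>"
    and "(\<integral>p. invest_share (snd p) \<partial>\<mu>) = Fb \<tau> \<beta> (DeltaT - admits S 0)"
    using exists_conjecture[OF assms E order_refl compl_admits_noninvest] by blast
  ultimately have "expected_payoff \<sigma> \<mu> 1 \<le> 0"
    using expected_payoff_invest[OF type_space conj] Fb_compl[OF type_space assms admits_noninvest_in_sets]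
    by linarith
  with conj show "0 \<in> Sstep \<sigma> \<tau> S \<beta>"
    unfolding mem_Sstep_iff by blast
qed

lemma Sstep_nonempty:
  assumes "\<beta> \<in> DeltaT"
  shows "Sstep \<sigma> \<tau> S \<beta> \<noteq> {}"
proof -
  have "Fb \<tau> \<beta> (DeltaT - admits S 0) \<le> Fb \<tau> \<beta> (admits S 1)"
    using DeltaT_in_sets admits_noninvest_in_sets admits_invest_in_sets compl_admits_noninvest
    by (intro Fb_mono[OF type_space assms]) auto
  then have "1 - Fb \<tau> \<beta> (admits S 0) \<le> Fb \<tau> \<beta> (admits S 1)"
    using Fb_compl[OF type_space assms admits_noninvest_in_sets] by simp
  then show ?thesis
    using invest_in_Sstep_iff[OF assms] noninvest_in_Sstep_iff[OF assms] by force
qed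

end

lemma Sstep_mono:
  assumes "\<And>\<gamma>. S \<gamma> \<subseteq> S' \<gamma>"
  shows "Sstep \<sigma> \<tau> S \<beta> \<subseteq> Sstep \<sigma> \<tau> S' \<beta>"
proof -
  have "Dset \<tau> S t \<subseteq> Dset \<tau> S' t" for t
    unfolding Dset_def using assms by (auto elim!: eventually_mono)
  then show ?thesis
    unfolding Sstep_def by (fastforce elim!: eventually_mono)
qed

lemma Sm_subset_Act: "Sm \<sigma> \<tau> m \<gamma> \<subseteq> Act"
  by (cases m) (auto simp: Sstep_def)

lemma decseq_Sm: "decseq (\<lambda>m. Sm \<sigma> \<tau> m \<gamma>)"
proof -
  have "Sm \<sigma> \<tau> (Suc m) \<gamma> \<subseteq> Sm \<sigma> \<tau> m \<gamma>" for m \<gamma>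
  proof (induction m arbitrary: \<gamma>)
    case 0
    show ?case by (auto simp: Sstep_def)
  next
    case (Suc m)
    then show ?case by (simp add: Sstep_mono)
  qed
  then show ?thesis
    by (simp add: decseq_Suc_iff)
qed

lemma Sm_characterization:
  assumes ts: "type_space \<sigma> \<tau>"
  shows "admits (Sm \<sigma> \<tau> m) 1 = (Bop \<tau> (\<lambda>\<gamma>. 1 - xb \<sigma> \<gamma>) ^^ m) DeltaT \<and>
    admits (Sm \<sigma> \<tau> m) 0 = (Bop \<tau> (xb \<sigma>) ^^ m) DeltaT \<and> (\<forall>\<gamma>\<in>DeltaT. Sm \<sigma> \<tau> m \<gamma> \<noteq> {})"
proof (induction m)
  case 0
  show ?case by (auto simp: admits_def Act_def)
next
  case (Suc m)
  have [measurable]: "xb \<sigma> \<in> borel_measurable (prob_algebra borel)"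
    by (rule borel_measurable_xb[OF ts])
  have "(\<lambda>\<gamma>. 1 - xb \<sigma> \<gamma>) \<in> borel_measurable (prob_algebra borel)"
    by measurable
  then interpret rationalizability_round \<sigma> \<tau> "Sm \<sigma> \<tau> m"
    using ts Suc.IH Bop_iterate_in_sets[OF ts] by unfold_locales (auto simp: Sm_subset_Act)
  have "Sm \<sigma> \<tau> (Suc m) \<gamma> \<subseteq> Sm \<sigma> \<tau> m \<gamma>" for \<gamma>
    using decseq_Sm[THEN decseqD, of m "Suc m"] by auto
  then have "admits (Sm \<sigma> \<tau> (Suc m)) 1 = Bop \<tau> (\<lambda>\<gamma>. 1 - xb \<sigma> \<gamma>) (admits (Sm \<sigma> \<tau> m) 1)"
    and "admits (Sm \<sigma> \<tau> (Suc m)) 0 = Bop \<tau> (xb \<sigma>) (admits (Sm \<sigma> \<tau> m) 0)"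
    using invest_in_Sstep_iff noninvest_in_Sstep_iff by (auto simp: admits_def Bop_def)
  then show ?case
    using Suc.IH Sstep_nonempty by simp
qed

lemma decseq_Inter_nonempty:
  assumes "decseq A" "finite (A 0)" "\<And>m. A m \<noteq> {}"
  shows "(\<Inter>m. A m) \<noteq> {}"
proof
  assume "(\<Inter>m. A m) = {}"
  then obtain k where k: "\<And>x. x \<in> A 0 \<Longrightarrow> x \<notin> A (k x)"
    by (metis INT_I empty_iff)
  define M where "M = Max (k ` A 0)"
  have "x \<notin> A M" for x
  proof
    assume x: "x \<in> A M"
    then have "x \<in> A 0"
      using decseqD[OF assms(1), of 0 M] by auto
    then have "A M \<subseteq> A (k x)"
      using assms(2) by (intro decseqD[OF assms(1)]) (simp add: M_def)
    then show False
      using k[OF \<open>x \<in> A 0\<close>] x by blast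
  qed
  then show False
    using assms(3)[of M] by blast
qed

lemma Max_eq_1_iff:
  assumes "S \<subseteq> {0, 1::real}" "S \<noteq> {}"
  shows "Max S = 1 \<longleftrightarrow> 1 \<in> S"
proof -
  have "finite S"
    using assms(1) by (rule finite_subset) simp
  then have "Max S \<in> S" "1 \<in> S \<Longrightarrow> 1 \<le> Max S"
    using assms(2) by (auto intro: Max_in Max_ge)
  then show ?thesis
    using assms(1) by auto
qed

lemma Min_eq_0_iff:
  assumes "S \<subseteq> {0, 1::real}" "S \<noteq> {}"
  shows "Min S = 0 \<longleftrightarrow> 0 \<in> S"
proof -
  have "finite S"
    using assms(1) by (rule finite_subset) simp
  then have "Min S \<in> S" "0 \<in> S \<Longrightarrow> Min S \<le> 0"
    using assms(2) by (auto intro: Min_in Min_le)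
  then show ?thesis
    using assms(1) by auto
qed

theorem lemma3:
  fixes \<sigma> :: "'t::metric_space \<Rightarrow> real" and \<tau> :: "'t \<Rightarrow> 't measure measure"
  assumes "type_space \<sigma> \<tau>"
    and "\<beta> \<in> DeltaT"
  shows "(Max (Srat \<sigma> \<tau> \<beta>) = 1 \<longleftrightarrow> \<beta> \<in> Cop \<tau> (\<lambda>\<gamma>. 1 - xb \<sigma> \<gamma>) DeltaT)
       \<and> (Min (Srat \<sigma> \<tau> \<beta>) = 0 \<longleftrightarrow> \<beta> \<in> Cop \<tau> (xb \<sigma>) DeltaT)"
proof -
  note characterization = Sm_characterization[OF assms(1)]
  have "Srat \<sigma> \<tau> \<beta> \<subseteq> {0, 1}"
    using INT_lower[of 0 UNIV "\<lambda>m. Sm \<sigma> \<tau> m \<beta>"] by (simp add: Srat_def Act_def)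
  moreover have "Srat \<sigma> \<tau> \<beta> \<noteq> {}"
    unfolding Srat_def using decseq_Sm characterization assms(2)
    by (intro decseq_Inter_nonempty) (auto simp: Act_def)
  moreover have "a \<in> Srat \<sigma> \<tau> \<beta> \<longleftrightarrow> (\<forall>m. \<beta> \<in> admits (Sm \<sigma> \<tau> m) a)" for a
    using assms(2) by (auto simp: Srat_def admits_def)
  ultimately show ?thesis
    using characterization mem_Cop_iff[OF assms(2)] Max_eq_1_iff Min_eq_0_iff by simp
qed

end
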